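(* Let $\mathbf{L}$ be the $8\times 12$ $(0,1)$-matrix with rows $(1,1,0,1,0,0,0,0,0,0,0,0)$, $(1,1,0,0,1,0,0,0,0,1,0,0)$, $(1,0,1,0,0,1,0,0,0,0,1,0)$, $(1,0,1,0,0,0,1,0,0,0,0,0)$, $(0,1,1,0,0,0,0,1,0,0,0,1)$, $(0,1,1,0,0,0,0,0,1,0,0,0)$, $(1,\dots,1)$, $(0,\dots,0)$, and $\mathbf{R}$ the $8\times12$ $(0,1)$-matrix with rows $(1,1,0,0,1,0,0,\dots,0)$, $(1,1,1,0,0,1,0,\dots,0)$, $(1,1,1,1,0,0,0,\dots,0)$, $(1,0,1,0,1,0,0,\dots,0)$, $(1,1,0,1,0,1,0,\dots,0)$, $(1,0,0,1,0,1,0,\dots,0)$, $(1,\dots,1)$, $(0,\dots,0)$ (in the first six rows, the last six entries are $0$). Then $(\mathbf{L},\mathbf{R})$ is centered and $\mathbf{L}\preceq^{\mathrm{BC}}\mathbf{R}$, but $\mathbf{L}\not\preceq^{\mathrm{PC}}\mathbf{R}$; specifically, for $v=(2,1,1,3,1,3,0,0)$ one has $v\mathbf{L}\not\preceq v\mathbf{R}$.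
   Context: $\mathbf{A}_{(i)}$ is the $i$-th row; $e$ the all-ones row vector; $|v|=\sum_k|v_k|$. A pair of $(0,1)$-matrices with the same number of rows, having a common all-zero row, is centered if $|\mathbf{L}_{(i)}|=|\mathbf{R}_{(i)}|$ for all $i$ and some row satisfies $\mathbf{L}_{(i)}=e=\mathbf{R}_{(i)}$. For $x,y\in\mathbb{R}^d$, $x\preceq y$ means $\sum_{n=1}^k x^\downarrow_n\le\sum_{n=1}^k y^\downarrow_n$ for $k=1,\dots,d-1$ and $\sum_n x_n=\sum_n y_n$, with $x^\downarrow_n$ the $n$-th largest component. $\mathbf{L}\preceq^{\mathrm{BC}}\mathbf{R}$ means $v\mathbf{L}\preceq v\mathbf{R}$ for all $v\in\{0,1\}^8$; $\mathbf{L}\preceq^{\mathrm{PC}}\mathbf{R}$ means $v\mathbf{L}\preceq v\mathbf{R}$ for all $v\in\mathbb{R}_{\ge0}^8$ (row vectors $v$). *)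

theory Defs
  imports Complex_Main
begin

text \<open>Matrices are lists of rows (real lists); row vectors are real lists.\<close>

definition ncols :: "real list list \<Rightarrow> nat" where
  "ncols M = (if M = [] then 0 else length (hd M))"

definition is_matrix :: "nat \<Rightarrow> nat \<Rightarrow> real list list \<Rightarrow> bool" where
  "is_matrix m n M \<longleftrightarrow> length M = m \<and> (\<forall>r\<in>set M. length r = n)"

definition zero_one_matrix :: "real list list \<Rightarrow> bool" where
  "zero_one_matrix M \<longleftrightarrow> (\<forall>r\<in>set M. length r = ncols M) \<and> (\<forall>r\<in>set M. set r \<subseteq> {0, 1})"

definition l1norm :: "real list \<Rightarrow> real" where
  "l1norm v = sum_list (map abs v)"

definition vecmat :: "real list \<Rightarrow> real list list \<Rightarrow> real list" where
  "vecmat v M = map (\<lambda>j. \<Sum>i<length M. v ! i * (M ! i ! j)) [0..<ncols M]"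

definition decr :: "real list \<Rightarrow> real list" where
  "decr x = rev (sort x)"

definition majorized :: "real list \<Rightarrow> real list \<Rightarrow> bool" where
  "majorized x y \<longleftrightarrow> length x = length y \<and>
     (\<forall>k\<in>{1..<length x}. sum_list (take k (decr x)) \<le> sum_list (take k (decr y))) \<and>
     sum_list x = sum_list y"

definition centered :: "real list list \<Rightarrow> real list list \<Rightarrow> bool" where
  "centered L R \<longleftrightarrow> zero_one_matrix L \<and> zero_one_matrix R \<and> length L = length R \<and>
     (\<exists>i<length L. set (L ! i) \<subseteq> {0} \<and> set (R ! i) \<subseteq> {0}) \<and>
     (\<forall>i<length L. l1norm (L ! i) = l1norm (R ! i)) \<and>
     (\<exists>i<length L. L ! i = replicate (ncols L) 1 \<and> R ! i = replicate (ncols R) 1)"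

definition BC_le :: "real list list \<Rightarrow> real list list \<Rightarrow> bool" where
  "BC_le L R \<longleftrightarrow> (\<forall>v. length v = length L \<and> set v \<subseteq> {0, 1} \<longrightarrow> majorized (vecmat v L) (vecmat v R))"

definition PC_le :: "real list list \<Rightarrow> real list list \<Rightarrow> bool" where
  "PC_le L R \<longleftrightarrow> (\<forall>v. length v = length L \<and> (\<forall>x\<in>set v. x \<ge> 0) \<longrightarrow> majorized (vecmat v L) (vecmat v R))"

definition Lmat :: "real list list" where
  "Lmat = [[1,1,0,1,0,0,0,0,0,0,0,0],
           [1,1,0,0,1,0,0,0,0,1,0,0],
           [1,0,1,0,0,1,0,0,0,0,1,0],
           [1,0,1,0,0,0,1,0,0,0,0,0],
           [0,1,1,0,0,0,0,1,0,0,0,1],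
           [0,1,1,0,0,0,0,0,1,0,0,0],
           [1,1,1,1,1,1,1,1,1,1,1,1],
           [0,0,0,0,0,0,0,0,0,0,0,0]]"

definition Rmat :: "real list list" where
  "Rmat = [[1,1,0,0,1,0,0,0,0,0,0,0],
           [1,1,1,0,0,1,0,0,0,0,0,0],
           [1,1,1,1,0,0,0,0,0,0,0,0],
           [1,0,1,0,1,0,0,0,0,0,0,0],
           [1,1,0,1,0,1,0,0,0,0,0,0],
           [1,0,0,1,0,1,0,0,0,0,0,0],
           [1,1,1,1,1,1,1,1,1,1,1,1],
           [0,0,0,0,0,0,0,0,0,0,0,0]]"

end

theory Submission
  imports Defs "HOL-Library.Multiset"
begin

(* The all-ones row adds the same constant to every entry of both v L and v R, the zero row
   contributes nothing, and majorization is invariant under translation.  So the binary condition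
   reduces to the 64 choices of the first six weights, which are checked by computation.
   For v = (2,1,1,3,1,3,0,0) one gets v L = (7,7,8,2,1,1,3,1,3,1,1,1) and
   v R = (11,5,5,5,5,5,0,...,0), whose three largest entries sum to 22 > 21. *)

lemma sort_map_mono:
  fixes f :: "'a::linorder \<Rightarrow> 'b::linorder"
  assumes "mono f"
  shows "sort (map f xs) = map f (sort xs)"
  by (rule properties_for_sort)
    (auto simp: sorted_map intro: sorted_wrt_mono_rel[OF _ sorted_sort] monoD[OF assms])

lemma length_decr [simp]: "length (decr xs) = length xs"
  by (simp add: decr_def)

lemma decr_translate: "decr (map (\<lambda>x. x + c) xs) = map (\<lambda>x. x + c) (decr xs)"
  by (simp add: decr_def sort_map_mono mono_def rev_map)

lemma sum_list_translate: "sum_list (map (\<lambda>x. x + c) xs) = sum_list xs + of_nat (length xs) * c"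
  by (induction xs) (auto simp: algebra_simps)

lemma prefix_sum_decr_translate:
  "sum_list (take k (decr (map (\<lambda>x. x + c) xs)))
     = sum_list (take k (decr xs)) + of_nat (min k (length xs)) * c"
  by (simp add: decr_translate take_map sum_list_translate min.commute)

lemma majorized_translate:
  "majorized (map (\<lambda>x. x + c) xs) (map (\<lambda>x. x + c) ys) \<longleftrightarrow> majorized xs ys"
  by (auto simp: majorized_def prefix_sum_decr_translate sum_list_translate)

lemma not_PC_le_if_not_majorized:
  assumes "length v = length L" "\<forall>x\<in>set v. x \<ge> 0"
    and "\<not> majorized (vecmat v L) (vecmat v R)"
  shows "\<not> PC_le L R"
  using assms unfolding PC_le_def by blast

lemma length_8_cases:
  assumes "length v = 8"
  obtains a b c d e f g h where "v = [a,b,c,d,e,f,g,h]"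
  using assms by (auto simp: numeral_eq_Suc length_Suc_conv)

lemma is_matrix_Lmat: "is_matrix 8 12 Lmat"
  by (simp add: is_matrix_def Lmat_def)

lemma is_matrix_Rmat: "is_matrix 8 12 Rmat"
  by (simp add: is_matrix_def Rmat_def)

lemma vecmat_Lmat:
  "vecmat [a,b,c,d,e,f,g,h] Lmat =
     map (\<lambda>x. x + g) [a+b+c+d, a+b+e+f, c+d+e+f, a, b, c, d, e, f, b, c, e]"
  by (simp add: vecmat_def Lmat_def ncols_def lessThan_nat_numeral upt_rec)

lemma vecmat_Rmat:
  "vecmat [a,b,c,d,e,f,g,h] Rmat =
     map (\<lambda>x. x + g) [a+b+c+d+e+f, a+b+c+e, b+c+d, c+e+f, a+d, b+e+f, 0, 0, 0, 0, 0, 0]"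
  by (simp add: vecmat_def Rmat_def ncols_def lessThan_nat_numeral upt_rec)

lemma centered_Lmat_Rmat: "centered Lmat Rmat"
proof -
  have "zero_one_matrix Lmat" "zero_one_matrix Rmat"
    by (simp_all add: zero_one_matrix_def Lmat_def Rmat_def ncols_def)
  moreover have "length Lmat = length Rmat"
    by (simp add: Lmat_def Rmat_def)
  moreover have "\<exists>i<length Lmat. set (Lmat ! i) \<subseteq> {0} \<and> set (Rmat ! i) \<subseteq> {0}"
    by (rule exI[of _ 7]) (simp add: Lmat_def Rmat_def)
  moreover have "\<forall>i<length Lmat. l1norm (Lmat ! i) = l1norm (Rmat ! i)"
    by (simp add: l1norm_def Lmat_def Rmat_def numeral_eq_Suc less_Suc_eq all_conj_distrib)
  moreover have "\<exists>i<length Lmat. Lmat ! i = replicate (ncols Lmat) 1 \<and> Rmat ! i = replicate (ncols Rmat) 1"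
    by (rule exI[of _ 6]) (simp add: Lmat_def Rmat_def ncols_def)
  ultimately show ?thesis
    unfolding centered_def by blast
qed

lemma majorized_reduced_products:
  "\<forall>a\<in>{0,1}. \<forall>b\<in>{0,1}. \<forall>c\<in>{0,1}. \<forall>d\<in>{0,1}. \<forall>e\<in>{0,1}. \<forall>f\<in>{0,1::real}.
     majorized [a+b+c+d, a+b+e+f, c+d+e+f, a, b, c, d, e, f, b, c, e]
               [a+b+c+d+e+f, a+b+c+e, b+c+d, c+e+f, a+d, b+e+f, 0, 0, 0, 0, 0, 0]"
  by (simp add: majorized_def decr_def set_upt[symmetric] upt_rec)

lemma BC_le_Lmat_Rmat: "BC_le Lmat Rmat"
  unfolding BC_le_def
proof (intro allI impI)
  fix v :: "real list"
  assume v: "length v = length Lmat \<and> set v \<subseteq> {0, 1}"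
  then have "length v = 8" by (simp add: Lmat_def)
  then obtain a b c d e f g h where v_eq: "v = [a,b,c,d,e,f,g,h]"
    by (rule length_8_cases)
  with v have "a \<in> {0,1}" "b \<in> {0,1}" "c \<in> {0,1}" "d \<in> {0,1}" "e \<in> {0,1}" "f \<in> {0,1}"
    by auto
  then show "majorized (vecmat v Lmat) (vecmat v Rmat)"
    unfolding v_eq vecmat_Lmat vecmat_Rmat majorized_translate
    using majorized_reduced_products by blast
qed

lemma not_majorized_witness:
  "\<not> majorized (vecmat [2,1,1,3,1,3,0,0] Lmat) (vecmat [2,1,1,3,1,3,0,0] Rmat)"
    (is "\<not> majorized ?xL ?xR")
proof -
  have "?xL = [7,7,8,2,1,1,3,1,3,1,1,1]"
    by (simp add: vecmat_Lmat)
  moreover have "?xR = [11,5,5,5,5,5,0,0,0,0,0,0]"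
    by (simp add: vecmat_Rmat)
  ultimately have "sum_list (take 3 (decr ?xL)) = 22" "sum_list (take 3 (decr ?xR)) = 21"
    and "3 \<in> {1..<length ?xL}"
    by (simp_all add: decr_def)
  then show ?thesis
    unfolding majorized_def by fastforce
qed

theorem mainTheorem10:
  shows "is_matrix 8 12 Lmat \<and> is_matrix 8 12 Rmat \<and> centered Lmat Rmat \<and> BC_le Lmat Rmat \<and>
         \<not> PC_le Lmat Rmat \<and> \<not> majorized (vecmat [2,1,1,3,1,3,0,0] Lmat) (vecmat [2,1,1,3,1,3,0,0] Rmat)"
proof -
  have "\<not> PC_le Lmat Rmat"
    by (rule not_PC_le_if_not_majorized[OF _ _ not_majorized_witness]) (simp_all add: Lmat_def)
  then show ?thesis
    using is_matrix_Lmat is_matrix_Rmat centered_Lmat_Rmat BC_le_Lmat_Rmat not_majorized_witness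
    by blast
qed

end
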